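(* Let $m\ge3$ be odd, $n\ge2$, and let $\mathbf{c}=(c_1,\dots,c_n)^\top$ have all components positive and pairwise distinct. Let $\mathcal{A}=(a_{i_1\dots i_m})$ be the $m$th order $n$-dimensional tensor with $a_{i_1\dots i_m}=\frac{1}{c_{i_1}+\cdots+c_{i_m}}$. Then $\mathcal{A}$ is strongly positive definite.
   Context: For $\mathbf{x}\in\mathbb{R}^n$, $\mathcal{A}\mathbf{x}^{m-1}$ is the vector with $i$th component $\sum_{i_2,\dots,i_m}a_{ii_2\dots i_m}x_{i_2}\cdots x_{i_m}$. For odd $m$ and symmetric $\mathcal{A}$, $\mathcal{A}$ is strongly positive definite if $\mathcal{A}\mathbf{x}^{m-1}>\mathbf{0}$ componentwise for all nonzero $\mathbf{x}\in\mathbb{R}^n$. *)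

theory Defs
  imports "HOL-Analysis.Analysis" "HOL-Library.Multiset"
begin

text \<open>An m-th order n-dimensional real tensor is represented as a function on index
  lists; only index lists of length m with entries in {0..<n} are relevant
  (indices are 0-based). Vectors in R^n are functions nat => real, components i < n.\<close>

definition index_tuples :: "nat \<Rightarrow> nat \<Rightarrow> nat list set" where
  "index_tuples k n = {is. length is = k \<and> set is \<subseteq> {..<n}}"

text \<open>(A x^(m-1))_i = sum over i2..im of a_{i i2 .. im} x_{i2} ... x_{im}\<close>
definition tensor_apply :: "nat \<Rightarrow> nat \<Rightarrow> (nat list \<Rightarrow> real) \<Rightarrow> (nat \<Rightarrow> real) \<Rightarrow> nat \<Rightarrow> real" where
  "tensor_apply m n A x i = (\<Sum>is\<in>index_tuples (m - 1) n. A (i # is) * (\<Prod>j\<leftarrow>is. x j))"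

definition symmetric_tensor :: "nat \<Rightarrow> nat \<Rightarrow> (nat list \<Rightarrow> real) \<Rightarrow> bool" where
  "symmetric_tensor m n A \<longleftrightarrow>
     (\<forall>is\<in>index_tuples m n. \<forall>js. mset js = mset is \<longrightarrow> A js = A is)"

definition strongly_pos_def_tensor :: "nat \<Rightarrow> nat \<Rightarrow> (nat list \<Rightarrow> real) \<Rightarrow> bool" where
  "strongly_pos_def_tensor m n A \<longleftrightarrow>
     odd m \<and> symmetric_tensor m n A \<and>
     (\<forall>x :: nat \<Rightarrow> real. (\<exists>i<n. x i \<noteq> 0) \<longrightarrow> (\<forall>i<n. tensor_apply m n A x i > 0))"

end

theory Submission
  imports Defs "HOL-Real_Asymp.Real_Asymp"
begin

(* Since 1/s is the integral of exp(-s t) over [0, inf), the i-th component of A x^(m-1) equals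
   the integral of exp(-c_i t) * F(t)^(m-1) with F(t) = sum_j x_j exp(-c_j t). For odd m the
   integrand is nonnegative, and it does not vanish identically because exponentials with
   distinct rates are linearly independent; being continuous, it has positive integral. *)

lemma index_tuples_0: "index_tuples 0 n = {[]}"
  by (auto simp: index_tuples_def)

lemma index_tuples_Suc:
  "index_tuples (Suc k) n = (\<lambda>(a, is). a # is) ` ({..<n} \<times> index_tuples k n)"
  by (auto simp: index_tuples_def length_Suc_conv image_iff)

lemma finite_index_tuples: "finite (index_tuples k n)"
  using finite_lists_length_eq[of "{..<n}" k] by (simp add: index_tuples_def conj_commute)

lemma sum_power_eq_sum_index_tuples:
  fixes f :: "nat \<Rightarrow> 'a::comm_semiring_1"
  shows "(\<Sum>j<n. f j) ^ k = (\<Sum>is\<in>index_tuples k n. \<Prod>j\<leftarrow>is. f j)"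
proof (induction k)
  case 0
  then show ?case by (simp add: index_tuples_0)
next
  case (Suc k)
  have inj: "inj_on (\<lambda>(a, is). a # is) ({..<n} \<times> index_tuples k n)"
    by (auto simp: inj_on_def)
  have "(\<Sum>j<n. f j) ^ Suc k = (\<Sum>a<n. \<Sum>is\<in>index_tuples k n. f a * (\<Prod>j\<leftarrow>is. f j))"
    using Suc by (simp add: sum_product)
  also have "\<dots> = (\<Sum>p\<in>{..<n} \<times> index_tuples k n. f (fst p) * (\<Prod>j\<leftarrow>snd p. f j))"
    by (simp add: sum.cartesian_product case_prod_beta)
  also have "\<dots> = (\<Sum>is\<in>index_tuples (Suc k) n. \<Prod>j\<leftarrow>is. f j)"
    unfolding index_tuples_Suc by (subst sum.reindex[OF inj]) (simp add: case_prod_beta)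
  finally show ?case .
qed

lemma prod_list_mult_exp:
  fixes x c :: "'a \<Rightarrow> real"
  shows "(\<Prod>j\<leftarrow>is. x j * exp (- c j * t)) = (\<Prod>j\<leftarrow>is. x j) * exp (- (\<Sum>j\<leftarrow>is. c j) * t)"
  by (induction "is") (simp_all add: algebra_simps exp_diff exp_minus divide_inverse)

(* Multiplying by exp(c_k t) for the slowest rate c_k of a nonzero coefficient, the sum tends to x_k. *)
lemma exp_sum_eventually_zero_imp_zero:
  fixes x c :: "'a \<Rightarrow> real"
  assumes "finite S" and "inj_on c S"
    and zero: "eventually (\<lambda>t. (\<Sum>j\<in>S. x j * exp (- c j * t)) = 0) at_top"
    and "j \<in> S"
  shows "x j = 0"
proof (rule ccontr)
  assume "x j \<noteq> 0"
  define S' where "S' = {j\<in>S. x j \<noteq> 0}"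
  have S': "finite S'" "S' \<noteq> {}" "S' \<subseteq> S"
    using \<open>finite S\<close> \<open>j \<in> S\<close> \<open>x j \<noteq> 0\<close> by (auto simp: S'_def)
  define k where "k = arg_min_on c S'"
  have k: "k \<in> S'" and k_min: "\<And>j. j \<in> S' \<Longrightarrow> c k \<le> c j"
    using arg_min_if_finite[OF S'(1,2), of c] arg_min_least[OF S'(1,2), of _ c]
    by (auto simp: k_def)
  have rates: "c j - c k > 0" if "j \<in> S' - {k}" for j
    using k_min[of j] inj_onD[OF \<open>inj_on c S\<close>, of j k] that k S'(3) by fastforce
  define g where "g t = x k + (\<Sum>j\<in>S' - {k}. x j * exp (- (c j - c k) * t))" for t
  have "g t = exp (c k * t) * (\<Sum>j\<in>S. x j * exp (- c j * t))" for t
  proof -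
    have "(\<Sum>j\<in>S. x j * exp (- c j * t)) = (\<Sum>j\<in>S'. x j * exp (- c j * t))"
      by (rule sum.mono_neutral_right[OF \<open>finite S\<close> S'(3)]) (auto simp: S'_def)
    then show ?thesis
      using S'(1) k
      by (simp add: g_def sum_distrib_left sum.remove algebra_simps flip: exp_add)
  qed
  then have vanishes: "eventually (\<lambda>t. g t = 0) at_top"
    using zero by (auto elim: eventually_mono)
  have decay: "((\<lambda>t. exp (- d * t)) \<longlongrightarrow> 0) at_top" if "d > 0" for d :: real
    using that by real_asymp
  have "(g \<longlongrightarrow> x k + 0) at_top"
    unfolding g_def
    by (intro tendsto_add tendsto_const tendsto_null_sum tendsto_mult_right_zero decay rates)
  then have "x k = 0"
    using tendsto_cong[OF vanishes] by (simp add: tendsto_const_iff)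
  then show False
    using k by (simp add: S'_def)
qed

lemma has_integral_pos_if_pos_at:
  fixes f :: "real \<Rightarrow> real"
  assumes "(f has_integral I) {a..}" and "continuous_on {a..} f"
    and "\<And>t. t \<ge> a \<Longrightarrow> f t \<ge> 0" and "t0 \<ge> a" and "f t0 > 0"
  shows "I > 0"
proof -
  let ?J = "integral {a..t0 + 1} f"
  have cont: "continuous_on {a..t0 + 1} f"
    using assms(2) by (rule continuous_on_subset) auto
  have "?J \<ge> 0"
    using cont assms(3) by (intro integral_nonneg integrable_continuous_real) auto
  moreover have "?J \<noteq> 0"
    using integral_eq_0_iff[OF cont] assms(3-5) by fastforce
  moreover have "?J \<le> I"
    using has_integral_subset_le[OF _ integrable_integral[OF integrable_continuous_real[OF cont]]
        assms(1)] assms(3) by auto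
  ultimately show ?thesis by linarith
qed

lemma symmetric_tensor_fun_of_sum:
  fixes c :: "nat \<Rightarrow> 'a::comm_monoid_add" and f :: "'a \<Rightarrow> real"
  shows "symmetric_tensor m n (\<lambda>is. f (\<Sum>k\<leftarrow>is. c k))"
  unfolding symmetric_tensor_def by (metis mset_map sum_mset_sum_list)

lemma tensor_apply_inverse_sum_has_integral:
  fixes c x :: "nat \<Rightarrow> real"
  assumes c_pos: "\<forall>j<n. c j > 0" and "i < n"
  shows "((\<lambda>t. exp (- c i * t) * (\<Sum>j<n. x j * exp (- c j * t)) ^ (m - 1))
          has_integral tensor_apply m n (\<lambda>is. 1 / (\<Sum>k\<leftarrow>is. c k)) x i) {0..}"
proof -
  define s where "s is = c i + (\<Sum>k\<leftarrow>is. c k)" for "is"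
  have s_pos: "s is > 0" if "is \<in> index_tuples (m - 1) n" for "is"
  proof -
    have "(\<Sum>k\<leftarrow>is. c k) \<ge> 0"
      using that c_pos by (intro sum_list_nonneg) (auto simp: index_tuples_def less_imp_le)
    then show ?thesis
      using c_pos \<open>i < n\<close> by (simp add: s_def add_pos_nonneg)
  qed
  have integrand: "exp (- c i * t) * (\<Sum>j<n. x j * exp (- c j * t)) ^ (m - 1)
      = (\<Sum>is\<in>index_tuples (m - 1) n. (\<Prod>j\<leftarrow>is. x j) * exp (- s is * t))" for t
    unfolding sum_power_eq_sum_index_tuples prod_list_mult_exp sum_distrib_left
    by (simp add: s_def algebra_simps flip: exp_add)
  have component: "tensor_apply m n (\<lambda>is. 1 / (\<Sum>k\<leftarrow>is. c k)) x i
      = (\<Sum>is\<in>index_tuples (m - 1) n. (\<Prod>j\<leftarrow>is. x j) * (exp (- s is * 0) / s is))"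
    by (simp add: tensor_apply_def s_def)
  show ?thesis
    unfolding integrand component
    by (intro has_integral_sum finite_index_tuples has_integral_mult_right
        has_integral_exp_minus_to_infinity s_pos)
qed

lemma tensor_apply_inverse_sum_pos:
  fixes c x :: "nat \<Rightarrow> real"
  assumes "odd m" and c_pos: "\<forall>j<n. c j > 0" and "inj_on c {..<n}"
    and "\<exists>j<n. x j \<noteq> 0" and "i < n"
  shows "tensor_apply m n (\<lambda>is. 1 / (\<Sum>k\<leftarrow>is. c k)) x i > 0"
proof -
  define F where "F t = (\<Sum>j<n. x j * exp (- c j * t))" for t
  have "\<exists>t0\<ge>0. F t0 \<noteq> 0"
  proof (rule ccontr)
    assume "\<not> ?thesis"
    then have "eventually (\<lambda>t. F t = 0) at_top"
      unfolding eventually_at_top_linorder by blast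
    then show False
      using exp_sum_eventually_zero_imp_zero[of "{..<n}" c x] assms(3,4) by (auto simp: F_def)
  qed
  then obtain t0 where "t0 \<ge> 0" "F t0 \<noteq> 0" by blast
  have "even (m - 1)"
    using \<open>odd m\<close> by simp
  show ?thesis
  proof (rule has_integral_pos_if_pos_at)
    show "((\<lambda>t. exp (- c i * t) * F t ^ (m - 1)) has_integral
        tensor_apply m n (\<lambda>is. 1 / (\<Sum>k\<leftarrow>is. c k)) x i) {0..}"
      unfolding F_def using tensor_apply_inverse_sum_has_integral[OF c_pos \<open>i < n\<close>] .
    show "continuous_on {0..} (\<lambda>t. exp (- c i * t) * F t ^ (m - 1))"
      unfolding F_def by (intro continuous_intros)
    show "exp (- c i * t) * F t ^ (m - 1) \<ge> 0" for t
      using \<open>even (m - 1)\<close> by (simp add: zero_le_even_power)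
    show "exp (- c i * t0) * F t0 ^ (m - 1) > 0"
      using \<open>even (m - 1)\<close> \<open>F t0 \<noteq> 0\<close> by (simp add: zero_less_power_eq)
  qed fact
qed

theorem corollary3p6:
  fixes m n :: nat and c :: "nat \<Rightarrow> real"
  assumes "odd m" and "m \<ge> 3" and "n \<ge> 2"
    and "\<forall>i<n. c i > 0"
    and "\<forall>i<n. \<forall>j<n. i \<noteq> j \<longrightarrow> c i \<noteq> c j"
  shows "strongly_pos_def_tensor m n (\<lambda>is. 1 / (\<Sum>k\<leftarrow>is. c k))"
proof -
  have "inj_on c {..<n}"
    using assms(5) by (auto simp: inj_on_def)
  then show ?thesis
    unfolding strongly_pos_def_tensor_def
    using assms(1,4) symmetric_tensor_fun_of_sum tensor_apply_inverse_sum_pos by blast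
qed

end
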